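(* Let $(q_n)_{n \ge 1}$ be a sequence of positive rational numbers, and let $(p_n)_{n \ge 1}$ be a sequence of prime numbers such that, for every $n \in \mathbb{N}$, $p_n \mid \mathsf{d}(q_n)$ and $p_n \nmid \mathsf{d}(q_k)$ for every $k \in \mathbb{N}$ with $k \neq n$. Then the Puiseux monoid $M = \langle q_n \mid n \in \mathbb{N} \rangle$ is atomic and its set of atoms is $\mathcal{A}(M) = \{ q_n \mid n \in \mathbb{N} \}$.
   Context: For a positive rational $r = n/d$ with $n,d \in \mathbb{N}$ and $\gcd(n,d)=1$, write $\mathsf{n}(r) := n$ and $\mathsf{d}(r) := d$. A Puiseux monoid is an additive submonoid of $(\mathbb{Q}_{\ge 0},+)$; $\langle S \rangle$ denotes the submonoid generated by $S$. An atom of a (reduced, additive) monoid $M$ is a nonzero element $a$ such that $a = x + y$ with $x,y \in M$ implies $x = 0$ or $y = 0$; $\mathcal{A}(M)$ is the set of atoms. $M$ is atomic if every element of $M$ is a sum of finitely many atoms (the empty sum being $0$). *)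

theory Defs
  imports Complex_Main "HOL-Computational_Algebra.Primes"
begin

definition den :: "rat \<Rightarrow> int" where
  "den r = snd (quotient_of r)"

inductive_set gen_monoid :: "rat set \<Rightarrow> rat set" for S :: "rat set" where
  zero: "0 \<in> gen_monoid S"
| add: "s \<in> S \<Longrightarrow> x \<in> gen_monoid S \<Longrightarrow> s + x \<in> gen_monoid S"

(* atoms of a (reduced, additive) monoid M given as a subset of rat *)
definition atoms :: "rat set \<Rightarrow> rat set" where
  "atoms M = {a \<in> M. a \<noteq> 0 \<and> (\<forall>x\<in>M. \<forall>y\<in>M. a = x + y \<longrightarrow> x = 0 \<or> y = 0)}"

definition atomic :: "rat set \<Rightarrow> bool" where
  "atomic M = (\<forall>x\<in>M. \<exists>as. set as \<subseteq> atoms M \<and> x = sum_list as)"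

end

theory Submission
  imports Defs
begin

(* Since the rationals
   with denominator prime to p n are closed under addition, any decomposition q n = x + y in M
   has a summand, say x, built from q n itself; positivity then forces y = 0. So every generator
   is an atom, and conversely every atom is a generator because every element of M is a sum of
   generators. *)

lemma den_dvd_if_eq_divide:
  assumes "r = of_int a / of_int b" and "b \<noteq> 0"
  shows "den r dvd b"
proof -
  obtain n d where quot: "quotient_of r = (n, d)" by (cases "quotient_of r")
  have "r = of_int n / of_int d" and "d > 0" and "coprime n d"
    using quotient_of_div quotient_of_denom_pos quotient_of_coprime quot by blast+
  with assms have "a * d = n * b" by (simp add: field_simps flip: of_int_mult of_int_eq_iff)
  then have "d dvd n * b" by (metis dvd_triv_right)
  with \<open>coprime n d\<close> have "d dvd b" by (simp add: coprime_commute coprime_dvd_mult_right_iff)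
  with quot show ?thesis by (simp add: den_def)
qed

lemma den_eq_divide: "r = of_int (fst (quotient_of r)) / of_int (den r)" and den_pos: "den r > 0"
  using quotient_of_div[of r "fst (quotient_of r)" "den r"] quotient_of_denom_pos'[of r]
  by (simp_all add: den_def)

lemma den_add_dvd: "den (x + y) dvd den x * den y"
proof (rule den_dvd_if_eq_divide)
  let ?a = "fst (quotient_of x)" and ?c = "fst (quotient_of y)"
  show "x + y = of_int (?a * den y + ?c * den x) / of_int (den x * den y)"
    using den_pos[of x] den_pos[of y]
    by (subst den_eq_divide[of x], subst den_eq_divide[of y]) (simp add: field_simps)
  show "den x * den y \<noteq> 0" using den_pos[of x] den_pos[of y] by simp
qed

lemma prime_dvd_den_add:
  assumes "prime p" and "p dvd den (x + y)"
  shows "p dvd den x \<or> p dvd den y"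
  using assms den_add_dvd dvd_trans prime_dvd_mult_iff by metis

lemma den_zero [simp]: "den 0 = 1"
  by (simp add: den_def)

lemma gen_monoid_generator: "s \<in> S \<Longrightarrow> s \<in> gen_monoid S"
  using gen_monoid.add[OF _ gen_monoid.zero] by simp

lemma gen_monoid_nonneg:
  assumes "x \<in> gen_monoid S" and "\<And>s. s \<in> S \<Longrightarrow> s \<ge> 0"
  shows "x \<ge> 0"
  using assms by induction auto

lemma gen_monoid_sum_listE:
  assumes "x \<in> gen_monoid S"
  obtains xs where "set xs \<subseteq> S" and "x = sum_list xs"
proof -
  from assms have "\<exists>xs. set xs \<subseteq> S \<and> x = sum_list xs"
  proof induction
    case zero
    show ?case by (rule exI[of _ "[]"]) simp
  next
    case (add s x)
    then obtain xs where "set xs \<subseteq> S" "x = sum_list xs" by blast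
    with add.hyps(1) show ?case by (intro exI[of _ "s # xs"]) simp
  qed
  with that show ?thesis by blast
qed

lemma gen_monoid_prime_dvd_den:
  assumes "x \<in> gen_monoid S" and "prime p" and "p dvd den x"
    and nonneg: "\<And>s. s \<in> S \<Longrightarrow> s \<ge> 0"
  shows "\<exists>s\<in>S. p dvd den s \<and> s \<le> x"
  using assms(1,3)
proof induction
  case zero
  with \<open>prime p\<close> show ?case by (simp add: not_prime_unit)
next
  case (add s x)
  have "x \<ge> 0" using gen_monoid_nonneg[OF add.hyps(2) nonneg] .
  from \<open>prime p\<close> add.prems consider "p dvd den s" | "p dvd den x"
    using prime_dvd_den_add by blast
  then show ?case
  proof cases
    case 1
    with add.hyps(1) \<open>x \<ge> 0\<close> show ?thesis by force
  next
    case 2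
    with add.IH nonneg[OF add.hyps(1)] show ?thesis by force
  qed
qed

lemma atoms_gen_monoid_subset:
  assumes "0 \<notin> S"
  shows "atoms (gen_monoid S) \<subseteq> S"
proof
  fix a assume atom: "a \<in> atoms (gen_monoid S)"
  then have "a \<in> gen_monoid S" and "a \<noteq> 0" by (simp_all add: atoms_def)
  then obtain s x where s: "s \<in> S" and x: "x \<in> gen_monoid S" and a: "a = s + x"
    by (cases rule: gen_monoid.cases) auto
  from s assms have "s \<noteq> 0" by blast
  with atom s x a have "x = 0" unfolding atoms_def using gen_monoid_generator by blast
  with s a show "a \<in> S" by simp
qed

lemma generator_in_atoms:
  assumes nonneg: "\<And>s. s \<in> S \<Longrightarrow> s \<ge> 0"
    and "a \<in> S" and "a \<noteq> 0" and "prime p" and "p dvd den a"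
    and unique: "\<And>s. s \<in> S \<Longrightarrow> p dvd den s \<Longrightarrow> s = a"
  shows "a \<in> atoms (gen_monoid S)"
proof -
  have below: "a \<le> x" if "x \<in> gen_monoid S" and "p dvd den x" for x
    using gen_monoid_prime_dvd_den[OF that(1) \<open>prime p\<close> that(2) nonneg] unique by blast
  have "x = 0 \<or> y = 0"
    if x: "x \<in> gen_monoid S" and y: "y \<in> gen_monoid S" and a: "a = x + y" for x y
  proof -
    have "x \<ge> 0" "y \<ge> 0" using gen_monoid_nonneg nonneg x y by blast+
    moreover from \<open>prime p\<close> \<open>p dvd den a\<close> a have "p dvd den x \<or> p dvd den y"
      using prime_dvd_den_add by blast
    then have "a \<le> x \<or> a \<le> y" using below x y by blast
    ultimately show ?thesis using a by auto
  qed
  with assms(2,3) show ?thesis by (simp add: atoms_def gen_monoid_generator)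
qed

lemma atomic_gen_monoid:
  assumes "S \<subseteq> atoms (gen_monoid S)"
  shows "atomic (gen_monoid S)"
  unfolding atomic_def
proof
  fix x assume "x \<in> gen_monoid S"
  then obtain xs where "set xs \<subseteq> S" "x = sum_list xs" by (rule gen_monoid_sum_listE)
  with assms show "\<exists>as. set as \<subseteq> atoms (gen_monoid S) \<and> x = sum_list as" by blast
qed

theorem proposition3p5:
  fixes q :: "nat \<Rightarrow> rat" and p :: "nat \<Rightarrow> int"
  assumes qpos: "\<And>n. n \<ge> 1 \<Longrightarrow> q n > 0"
    and pprime: "\<And>n. n \<ge> 1 \<Longrightarrow> prime (p n)"
    and pdvd: "\<And>n. n \<ge> 1 \<Longrightarrow> p n dvd den (q n)"
    and pndvd: "\<And>n k. n \<ge> 1 \<Longrightarrow> k \<ge> 1 \<Longrightarrow> k \<noteq> n \<Longrightarrow> \<not> p n dvd den (q k)"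
  shows "atomic (gen_monoid {q n | n. n \<ge> 1}) \<and>
         atoms (gen_monoid {q n | n. n \<ge> 1}) = {q n | n. n \<ge> 1}"
proof -
  define S where "S = {q n | n. n \<ge> 1}"
  have "q n \<in> atoms (gen_monoid S)" if "n \<ge> 1" for n
  proof (rule generator_in_atoms[OF _ _ _ pprime[OF that] pdvd[OF that]])
    show "s \<ge> 0" if "s \<in> S" for s
      using that qpos less_imp_le unfolding S_def by blast
    show "q n \<in> S" using that unfolding S_def by blast
    show "q n \<noteq> 0" using qpos[OF that] by simp
    show "s = q n" if "s \<in> S" and "p n dvd den s" for s
    proof -
      from \<open>s \<in> S\<close> obtain k where "k \<ge> 1" and "s = q k" unfolding S_def by blast
      with \<open>p n dvd den s\<close> pndvd[OF \<open>n \<ge> 1\<close>] show ?thesis by blast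
    qed
  qed
  then have "S \<subseteq> atoms (gen_monoid S)" unfolding S_def by blast
  moreover have "0 \<notin> S" using qpos unfolding S_def by fastforce
  ultimately have "atomic (gen_monoid S) \<and> atoms (gen_monoid S) = S"
    using atomic_gen_monoid atoms_gen_monoid_subset by blast
  then show ?thesis by (simp only: S_def)
qed

end
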